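(* Let $h>0$, let $\Omega\subset\mathbb{R}^2$ be a bounded domain and $\vec c\in\mathbb{R}^2$. With the discrete Heaviside function $H$ and $\operatorname{G}H$ as in the context, \[ \sum_{i,j}(\operatorname{G}H)_{ij}=0\qquad\text{and}\qquad\sum_{i,j}\big((x_i,y_j)-\vec c\big)\times(\operatorname{G}H)_{ij}=0, \] where the sums run over all $(i,j)\in\mathbb{Z}^2$.
   Context: $x_i=ih$, $y_j=jh$, $x_{i\pm1/2}=(i\pm\frac12)h$; edges $E_{i+1/2,j}=\{x_{i+1/2}\}\times[y_{j-1/2},y_{j+1/2}]$, $E_{i,j+1/2}=[x_{i-1/2},x_{i+1/2}]\times\{y_{j+1/2}\}$. Discrete Heaviside: $H_{i+1/2,j}=\mathrm{length}(E_{i+1/2,j}\cap\Omega)/h$, $H_{i,j+1/2}=\mathrm{length}(E_{i,j+1/2}\cap\Omega)/h$. $(\operatorname{G}H)_{ij}=\big((H_{i+1/2,j}-H_{i-1/2,j})/h,\;(H_{i,j+1/2}-H_{i,j-1/2})/h\big)$. The planar cross product is the scalar $(a_1,a_2)\times(b_1,b_2)=a_1b_2-a_2b_1$. *)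

theory Defs
  imports "HOL-Analysis.Analysis"
begin

text \<open>Edge E_{i+1/2,j} is the vertical segment
  {x_{i+1/2}} x [y_{j-1/2}, y_{j+1/2}]; HeavX h \<Omega> i j is H_{i+1/2,j}.
  Edge E_{i,j+1/2} is the horizontal segment [x_{i-1/2}, x_{i+1/2}] x {y_{j+1/2}};
  HeavY h \<Omega> i j is H_{i,j+1/2}.\<close>

definition HeavX :: "real \<Rightarrow> (real \<times> real) set \<Rightarrow> int \<Rightarrow> int \<Rightarrow> real" where
  "HeavX h \<Omega> i j =
     measure lborel {y \<in> {(real_of_int j - 1/2) * h .. (real_of_int j + 1/2) * h}.
                      ((real_of_int i + 1/2) * h, y) \<in> \<Omega>} / h"

definition HeavY :: "real \<Rightarrow> (real \<times> real) set \<Rightarrow> int \<Rightarrow> int \<Rightarrow> real" where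
  "HeavY h \<Omega> i j =
     measure lborel {x \<in> {(real_of_int i - 1/2) * h .. (real_of_int i + 1/2) * h}.
                      (x, (real_of_int j + 1/2) * h) \<in> \<Omega>} / h"

definition GH :: "real \<Rightarrow> (real \<times> real) set \<Rightarrow> int \<Rightarrow> int \<Rightarrow> real \<times> real" where
  "GH h \<Omega> i j =
     ((HeavX h \<Omega> i j - HeavX h \<Omega> (i - 1) j) / h,
      (HeavY h \<Omega> i j - HeavY h \<Omega> i (j - 1)) / h)"

definition cross2 :: "real \<times> real \<Rightarrow> real \<times> real \<Rightarrow> real" where
  "cross2 a b = fst a * snd b - snd a * fst b"

end

theory Submission
  imports Defs
begin

text \<open>Both sums telescope. The components of \<open>GH\<close> are backward differences of \<open>H/h\<close>
  in one lattice direction, and in the cross product each difference is multiplied by a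
  coordinate that is constant along that direction, so it is again a backward difference.
  Since \<open>\<Omega>\<close> is bounded, only finitely many edges meet it, and a finitely supported
  difference \<open>f - f \<circ> \<sigma>\<close> with \<open>\<sigma>\<close> a bijection sums to zero.\<close>

lemma has_sum_diff:
  fixes f g :: "'a \<Rightarrow> 'b::topological_ab_group_add"
  assumes "(f has_sum a) A" and "(g has_sum b) A"
  shows "((\<lambda>x. f x - g x) has_sum (a - b)) A"
proof -
  have "((\<lambda>x. - g x) has_sum - b) A"
    using assms(2) by (simp add: has_sum_uminus)
  from has_sum_add[OF assms(1) this] show ?thesis
    by simp
qed

lemma has_sum_diff_reindex_bij:
  fixes f :: "'a \<Rightarrow> 'b::topological_ab_group_add"
  assumes "finite {x. f x \<noteq> 0}" and "bij \<sigma>"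
  shows "((\<lambda>x. f x - f (\<sigma> x)) has_sum 0) UNIV"
proof -
  define s where "s = (\<Sum>x\<in>{x. f x \<noteq> 0}. f x)"
  have f: "(f has_sum s) UNIV"
    unfolding s_def by (rule has_sum_finite_neutralI[OF assms(1)]) auto
  moreover have "((\<lambda>x. f (\<sigma> x)) has_sum s) UNIV"
    using f assms(2) by (simp add: has_sum_reindex_bij_betw)
  ultimately show ?thesis
    using has_sum_diff by fastforce
qed

definition grid_near :: "real \<Rightarrow> (real \<times> real) set \<Rightarrow> (int \<times> int) set" where
  "grid_near h \<Omega> =
     {(i, j). \<exists>p\<in>\<Omega>. \<bar>fst p - real_of_int i * h\<bar> \<le> h \<and> \<bar>snd p - real_of_int j * h\<bar> \<le> h}"

lemma int_index_bound:
  assumes "h > 0" and "\<bar>t\<bar> \<le> R" and "\<bar>t - real_of_int k * h\<bar> \<le> h"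
  shows "\<bar>k\<bar> \<le> \<lceil>R / h\<rceil> + 1"
proof -
  have "\<bar>real_of_int k\<bar> * h \<le> R + h"
    using assms(2,3) by (simp add: abs_mult abs_of_pos[OF \<open>h > 0\<close>])
  then have "\<bar>real_of_int k\<bar> \<le> R / h + 1"
    using \<open>h > 0\<close> by (simp add: field_simps)
  then show ?thesis
    by linarith
qed

lemma finite_grid_near:
  assumes "h > 0" and "bounded \<Omega>"
  shows "finite (grid_near h \<Omega>)"
proof -
  obtain R where R: "\<And>p. p \<in> \<Omega> \<Longrightarrow> norm p \<le> R"
    using assms(2) by (auto simp: bounded_iff)
  define N where "N = \<lceil>R / h\<rceil> + 1"
  have "\<bar>fst p\<bar> \<le> R" "\<bar>snd p\<bar> \<le> R" if "p \<in> \<Omega>" for p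
    using R[OF that] norm_fst_le[of "fst p" "snd p"] norm_snd_le[of "snd p" "fst p"] by auto
  then have "grid_near h \<Omega> \<subseteq> {-N..N} \<times> {-N..N}"
    using int_index_bound[OF assms(1)] unfolding grid_near_def N_def
    by (fastforce simp: abs_le_iff)
  then show ?thesis
    by (rule finite_subset) simp
qed

lemma HeavX_nonzero_imp_grid_near:
  assumes "h > 0" and "HeavX h \<Omega> i j \<noteq> 0"
  shows "(i, j) \<in> grid_near h \<Omega>"
proof -
  obtain y where "y \<in> {(real_of_int j - 1/2) * h .. (real_of_int j + 1/2) * h}"
    and "((real_of_int i + 1/2) * h, y) \<in> \<Omega>"
    using assms(2) unfolding HeavX_def
    by (metis (no_types, lifting) empty_Collect_eq measure_empty div_0)
  then show ?thesis
    using assms(1) unfolding grid_near_def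
    by (intro CollectI case_prodI bexI[of _ "((real_of_int i + 1/2) * h, y)"])
       (auto simp: algebra_simps)
qed

lemma HeavY_nonzero_imp_grid_near:
  assumes "h > 0" and "HeavY h \<Omega> i j \<noteq> 0"
  shows "(i, j) \<in> grid_near h \<Omega>"
proof -
  obtain x where "x \<in> {(real_of_int i - 1/2) * h .. (real_of_int i + 1/2) * h}"
    and "(x, (real_of_int j + 1/2) * h) \<in> \<Omega>"
    using assms(2) unfolding HeavY_def
    by (metis (no_types, lifting) empty_Collect_eq measure_empty div_0)
  then show ?thesis
    using assms(1) unfolding grid_near_def
    by (intro CollectI case_prodI bexI[of _ "(x, (real_of_int j + 1/2) * h)"])
       (auto simp: algebra_simps)
qed

lemma bij_shift_int_pair:
  fixes a b :: int
  shows "bij (\<lambda>(i, j). (i - a, j - b))"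
  by (rule bij_betwI[where g = "\<lambda>(i, j). (i + a, j + b)"]) auto

theorem lemma4p5:
  fixes h :: real and \<Omega> :: "(real \<times> real) set" and c :: "real \<times> real"
  assumes "h > 0" and "open \<Omega>" and "connected \<Omega>" and "bounded \<Omega>"
  shows "((\<lambda>(i, j). GH h \<Omega> i j) has_sum 0) (UNIV :: (int \<times> int) set)
         \<and> ((\<lambda>(i, j). cross2 ((real_of_int i * h, real_of_int j * h) - c) (GH h \<Omega> i j))
               has_sum 0) (UNIV :: (int \<times> int) set)"
proof -
  define X where "X = (\<lambda>(i, j). HeavX h \<Omega> i j / h)"
  define Y where "Y = (\<lambda>(i, j). HeavY h \<Omega> i j / h)"
  define sx :: "int \<times> int \<Rightarrow> int \<times> int" where "sx = (\<lambda>(i, j). (i - 1, j))"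
  define sy :: "int \<times> int \<Rightarrow> int \<times> int" where "sy = (\<lambda>(i, j). (i, j - 1))"
  have support: "{x. X x \<noteq> 0} \<subseteq> grid_near h \<Omega>" "{x. Y x \<noteq> 0} \<subseteq> grid_near h \<Omega>"
    using HeavX_nonzero_imp_grid_near HeavY_nonzero_imp_grid_near \<open>h > 0\<close>
    by (auto simp: X_def Y_def)
  have "bij sx" "bij sy"
    using bij_shift_int_pair[of 1 0] bij_shift_int_pair[of 0 1] by (simp_all add: sx_def sy_def)
  have telescope: "((\<lambda>x. f x - f (s x)) has_sum 0) UNIV"
    if "{x. f x \<noteq> 0} \<subseteq> grid_near h \<Omega>" and "bij s"
    for f :: "int \<times> int \<Rightarrow> 'b::topological_ab_group_add" and s
    using finite_subset[OF that(1) finite_grid_near[OF \<open>h > 0\<close> \<open>bounded \<Omega>\<close>]] that(2)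
    by (rule has_sum_diff_reindex_bij)
  have "(\<lambda>(i, j). GH h \<Omega> i j)
      = (\<lambda>x. ((X x, 0) - (X (sx x), 0)) + ((0, Y x) - (0, Y (sy x))))"
    by (auto simp: X_def Y_def sx_def sy_def GH_def diff_divide_distrib)
  moreover have "((\<lambda>x. ((X x, 0) - (X (sx x), 0)) + ((0, Y x) - (0, Y (sy x))))
      has_sum (0 + 0)) UNIV"
    by (intro has_sum_add telescope)
      (use support \<open>bij sx\<close> \<open>bij sy\<close> in \<open>auto simp: zero_prod_def\<close>)
  ultimately have gradient: "((\<lambda>(i, j). GH h \<Omega> i j) has_sum 0) UNIV"
    by simp
  define A1 where "A1 = (\<lambda>(i, j). (real_of_int i * h - fst c) * Y (i, j))"
  define A2 where "A2 = (\<lambda>(i, j). (real_of_int j * h - snd c) * X (i, j))"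
  have "(\<lambda>(i, j). cross2 ((real_of_int i * h, real_of_int j * h) - c) (GH h \<Omega> i j))
      = (\<lambda>x. (A1 x - A1 (sy x)) - (A2 x - A2 (sx x)))"
    by (auto simp: A1_def A2_def X_def Y_def sx_def sy_def GH_def cross2_def algebra_simps
        diff_divide_distrib)
  moreover have "((\<lambda>x. (A1 x - A1 (sy x)) - (A2 x - A2 (sx x))) has_sum (0 - 0)) UNIV"
    by (intro has_sum_diff telescope)
      (use support \<open>bij sx\<close> \<open>bij sy\<close> in \<open>auto simp: A1_def A2_def\<close>)
  ultimately show ?thesis
    using gradient by simp
qed

end
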